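(* Let $(X,\cdot)$ be a finite Rump right quasigroup. Then for every $x\in X$ there is a unique $y\in X$ such that $x(y/x) = y$.
   Context: A right quasigroup is a magma in which every right translation $y\mapsto yx$ is a bijection; $y/x$ denotes the unique $w$ with $wx = y$. A Rump right quasigroup is a right quasigroup satisfying $(zx)(yx)=(zy)(xy)$ for all $x,y,z$. *)

theory Defs
  imports Main
begin

definition right_quasigroup :: "('a \<Rightarrow> 'a \<Rightarrow> 'a) \<Rightarrow> bool" where
  "right_quasigroup m \<longleftrightarrow> (\<forall>x. bij (\<lambda>y. m y x))"

definition rump_right_quasigroup :: "('a \<Rightarrow> 'a \<Rightarrow> 'a) \<Rightarrow> bool" where
  "rump_right_quasigroup m \<longleftrightarrow> right_quasigroup m \<and>
     (\<forall>x y z. m (m z x) (m y x) = m (m z y) (m x y))"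

definition rdiv :: "('a \<Rightarrow> 'a \<Rightarrow> 'a) \<Rightarrow> 'a \<Rightarrow> 'a \<Rightarrow> 'a" where
  "rdiv m y x = (THE w. m w x = y)"

end

theory Submission
  imports Defs
begin

text \<open>Writing \<open>w = y/x\<close>, the condition \<open>x(y/x) = y\<close> says exactly that \<open>x\<close> and \<open>w\<close> commute.
  In a Rump right quasigroup commuting elements are equal: if \<open>xw = wx\<close>, the Rump identity
  \<open>(zx)(wx) = (zw)(xw)\<close> and right cancellation give \<open>zx = zw\<close> for all \<open>z\<close>, and \<open>z = x\<close> yields
  \<open>wx = xx\<close>, hence \<open>w = x\<close>. So \<open>y = xx\<close> is the unique solution.\<close>

lemma rump_right_quasigroupD:
  assumes "rump_right_quasigroup m"
  shows "right_quasigroup m" and "m (m z x) (m y x) = m (m z y) (m x y)"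
  using assms unfolding rump_right_quasigroup_def by blast+

lemma right_quasigroup_cancel_right:
  assumes "right_quasigroup m" and "m u a = m v a"
  shows "u = v"
  using assms unfolding right_quasigroup_def by (metis bij_def injD)

lemma right_quasigroup_ex1_rdiv:
  assumes "right_quasigroup m"
  shows "\<exists>!w. m w x = y"
  using assms unfolding right_quasigroup_def bij_iff by blast

lemma rdiv_mult_right:
  assumes "right_quasigroup m"
  shows "m (rdiv m y x) x = y"
  unfolding rdiv_def using theI'[OF right_quasigroup_ex1_rdiv[OF assms]] .

lemma rdiv_mult_cancel:
  assumes "right_quasigroup m"
  shows "rdiv m (m w x) x = w"
  unfolding rdiv_def using right_quasigroup_ex1_rdiv[OF assms] by (rule the1_equality) simp

lemma rump_commute_imp_eq:
  assumes rump: "rump_right_quasigroup m" and comm: "m x w = m w x"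
  shows "w = x"
proof -
  have rq: "right_quasigroup m" using rump by (rule rump_right_quasigroupD)
  have "m z x = m z w" for z
  proof -
    have "m (m z x) (m w x) = m (m z w) (m x w)" using rump by (rule rump_right_quasigroupD)
    also have "\<dots> = m (m z w) (m w x)" using comm by simp
    finally show ?thesis by (rule right_quasigroup_cancel_right[OF rq])
  qed
  then have "m w x = m x x" using comm by metis
  then show ?thesis by (rule right_quasigroup_cancel_right[OF rq])
qed

lemma rump_mult_rdiv_eq_iff:
  assumes rump: "rump_right_quasigroup m"
  shows "m x (rdiv m y x) = y \<longleftrightarrow> y = m x x"
proof
  have rq: "right_quasigroup m" using rump by (rule rump_right_quasigroupD)
  define w where "w = rdiv m y x"
  have y: "m w x = y" unfolding w_def using rq by (rule rdiv_mult_right)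
  assume "m x (rdiv m y x) = y"
  with y have "m x w = m w x" unfolding w_def by simp
  with rump have "w = x" by (rule rump_commute_imp_eq)
  with y show "y = m x x" by simp
next
  assume "y = m x x"
  with rump_right_quasigroupD(1)[OF rump] show "m x (rdiv m y x) = y"
    by (simp add: rdiv_mult_cancel)
qed

theorem mainTheorem5:
  fixes m :: "'a::finite \<Rightarrow> 'a \<Rightarrow> 'a"
  assumes "rump_right_quasigroup m"
  shows "\<forall>x. \<exists>!y. m x (rdiv m y x) = y"
  using rump_mult_rdiv_eq_iff[OF assms] by simp

end
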